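(* Let $q\in\mathbb C$ with $|q|\ne1$, $q\neq 0$, and let $x\in\mathbb C^*$ be such that none of $x^{\pm1},x^{\pm2}$ is an integer power of $q$. For $m\in\mathbb Z$ let $$\mathbf J_m(x,q)=\begin{pmatrix}1&C_m(x,q)&C_{m+1}(x,q)\\0&A_m(x,q)&A_{m+1}(x,q)\\0&B_m(x,q)&B_{m+1}(x,q)\end{pmatrix}.$$ Then $\mathbf J_{m+1}(x,q)=\mathbf J_m(x,q)A(x,q^m,q)$ with $$A(x,q^m,q)=\begin{pmatrix}1&0&1\\0&0&-1\\0&1&x^{-1}+x-q^{m+1}\end{pmatrix},$$ $\det\mathbf J_m(x,q)=x^{-1}-x$, and $$\mathbf J_m(x,q^{-1})=P\,\mathbf J_{-m-1}(x,q)\,P,\qquad P=\begin{pmatrix}1&0&0\\0&0&1\\0&1&0\end{pmatrix}.$$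
   Context: Notation: $(a;q)_k=\prod_{j=0}^{k-1}(1-aq^j)$. For $|q|\ne1$ and $m\in\mathbb Z$ (the series converge both for $|q|<1$ and $|q|>1$): $C_m(x,q)=\sum_{k\ge0}(-1)^k\frac{q^{k(k+1)/2+km}}{(x^{-1};q)_{k+1}(x;q)_{k+1}}$, $A_m(x,q)=\sum_{k\ge0}(-1)^k\frac{q^{k(k+1)/2+km}x^{k+m}}{(q;q)_k(x^2q;q)_k}$, $B_m(x,q)=A_m(x^{-1},q)$. *)

theory Defs
  imports "HOL-Analysis.Analysis"
begin

definition qpoch :: "complex \<Rightarrow> complex \<Rightarrow> nat \<Rightarrow> complex" where
  "qpoch a q k = (\<Prod>j<k. 1 - a * q ^ j)"

definition Cser :: "int \<Rightarrow> complex \<Rightarrow> complex \<Rightarrow> complex" where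
  "Cser m x q = (\<Sum>k. (-1) ^ k * q powi (int (k * (k + 1) div 2) + int k * m)
       / (qpoch (inverse x) q (k + 1) * qpoch x q (k + 1)))"

definition Aser :: "int \<Rightarrow> complex \<Rightarrow> complex \<Rightarrow> complex" where
  "Aser m x q = (\<Sum>k. (-1) ^ k * q powi (int (k * (k + 1) div 2) + int k * m) * x powi (int k + m)
       / (qpoch q q k * qpoch (x ^ 2 * q) q k))"

definition Bser :: "int \<Rightarrow> complex \<Rightarrow> complex \<Rightarrow> complex" where
  "Bser m x q = Aser m (inverse x) q"

definition mat3 :: "complex \<Rightarrow> complex \<Rightarrow> complex \<Rightarrow> complex \<Rightarrow> complex \<Rightarrow> complex
    \<Rightarrow> complex \<Rightarrow> complex \<Rightarrow> complex \<Rightarrow> complex^3^3" where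
  "mat3 a11 a12 a13 a21 a22 a23 a31 a32 a33 =
     (\<chi> i j. if i = 1 then (if j = 1 then a11 else if j = 2 then a12 else a13)
             else if i = 2 then (if j = 1 then a21 else if j = 2 then a22 else a23)
             else (if j = 1 then a31 else if j = 2 then a32 else a33))"

definition Jmat :: "int \<Rightarrow> complex \<Rightarrow> complex \<Rightarrow> complex^3^3" where
  "Jmat m x q = mat3 1 (Cser m x q) (Cser (m + 1) x q)
                     0 (Aser m x q) (Aser (m + 1) x q)
                     0 (Bser m x q) (Bser (m + 1) x q)"

definition Amat :: "complex \<Rightarrow> complex \<Rightarrow> complex \<Rightarrow> complex^3^3" where
  "Amat x t q = mat3 1 0 1
                     0 0 (-1)
                     0 1 (inverse x + x - t * q)"

definition Pmat :: "complex^3^3" where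
  "Pmat = mat3 1 0 0  0 0 1  0 1 0"

end

theory Submission
  imports Defs
begin

text \<open>Put u = q^m. Then A_m = x^m F_x(u), B_m = x^(-m) F_(1/x)(u) and C_m = G(u) for power
  series F_x, G in u whose coefficient ratios tend to 0, so they converge everywhere. Their coefficient
  recursions become q-difference equations in u, i.e. the three-term recurrence
  y_(m+2) = (x^(-1) + x - q^(m+1)) y_(m+1) - y_m (with an extra 1 for C), which is the matrix identity.
  Hence the Wronskian A_m B_(m+1) - A_(m+1) B_m does not depend on m. It is a function of u that is
  continuous at 0, and q^m \<rightarrow> 0 as m \<rightarrow> \<infinity> or m \<rightarrow> -\<infinity>, so it equals its value x^(-1) - x at u = 0.
  Finally (a; q^(-1))_k = (-a)^k q^(-k(k-1)/2) (a^(-1); q)_k shows that inverting q exchanges A and B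
  and fixes C, up to m \<mapsto> -m.\<close>

lemma summable_of_ratio_tendsto_0:
  fixes f :: "nat \<Rightarrow> 'a::banach"
  assumes f: "\<And>k. norm (f (Suc k)) = norm (f k) * r k" and r: "r \<longlonglongrightarrow> 0"
  shows "summable f"
proof -
  obtain N where N: "\<And>k. k \<ge> N \<Longrightarrow> \<bar>r k\<bar> < 1/2"
    using r[unfolded tendsto_iff, rule_format, of "1/2"] by (auto simp: eventually_sequentially)
  show ?thesis
  proof (rule summable_ratio_test[of "1/2" N])
    fix n assume "n \<ge> N"
    then have "norm (f n) * r n \<le> norm (f n) * (1/2)"
      using N[of n] by (intro mult_left_mono) auto
    then show "norm (f (Suc n)) \<le> 1/2 * norm (f n)" by (simp add: f mult.commute)
  qed simp
qed

lemma powser_summable_of_ratio_tendsto_0: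
  fixes c r :: "nat \<Rightarrow> 'a::{real_normed_field,banach}"
  assumes c: "\<And>k. c (Suc k) = c k * r k" and r: "r \<longlonglongrightarrow> 0"
  shows "summable (\<lambda>k. c k * u ^ k)"
proof (rule summable_of_ratio_tendsto_0[where r="\<lambda>k. norm (r k * u)"])
  show "norm (c (Suc k) * u ^ Suc k) = norm (c k * u ^ k) * norm (r k * u)" for k
    by (simp add: c norm_mult mult_ac)
  show "(\<lambda>k. norm (r k * u)) \<longlonglongrightarrow> 0"
    using tendsto_norm_zero[OF tendsto_mult_left_zero[OF r]] by (simp add: mult.commute)
qed

lemma isCont_powser_of_ratio_tendsto_0:
  fixes c r :: "nat \<Rightarrow> 'a::{real_normed_field,banach}"
  assumes c: "\<And>k. c (Suc k) = c k * r k" and r: "r \<longlonglongrightarrow> 0"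
  shows "isCont (\<lambda>u. \<Sum>k. c k * u ^ k) 0"
  by (rule isCont_powser[where K=1]) (use powser_summable_of_ratio_tendsto_0[OF c r, of 1] in auto)

lemma q_ratio_tendsto_0:
  fixes q a b c :: complex
  assumes "norm q \<noteq> 1" "q \<noteq> 0" "b \<noteq> 0" "c \<noteq> 0"
    and nb: "\<And>k. 1 - b * q ^ Suc k \<noteq> 0" and nc: "\<And>k. 1 - c * q ^ Suc k \<noteq> 0"
  shows "(\<lambda>k. a * q ^ Suc k / ((1 - b * q ^ Suc k) * (1 - c * q ^ Suc k))) \<longlonglongrightarrow> 0"
proof (cases "norm q < 1")
  case True
  have "(\<lambda>k. q ^ Suc k) \<longlonglongrightarrow> 0"
    using LIMSEQ_power_zero[OF True] by (rule LIMSEQ_Suc)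
  then have "(\<lambda>k. a * q ^ Suc k / ((1 - b * q ^ Suc k) * (1 - c * q ^ Suc k)))
      \<longlonglongrightarrow> a * 0 / ((1 - b * 0) * (1 - c * 0))"
    by (intro tendsto_intros) auto
  then show ?thesis by simp
next
  case False
  define p where "p = inverse q"
  have "norm p < 1"
    using False assms(1,2) by (simp add: p_def norm_inverse inverse_less_1_iff)
  have p0: "(\<lambda>k. p ^ Suc k) \<longlonglongrightarrow> 0"
    using LIMSEQ_power_zero[OF \<open>norm p < 1\<close>] by (rule LIMSEQ_Suc)
  have eq: "a * q ^ Suc k / ((1 - b * q ^ Suc k) * (1 - c * q ^ Suc k))
      = a * p ^ Suc k / ((p ^ Suc k - b) * (p ^ Suc k - c))" for k
  proof -
    have "q ^ Suc k \<noteq> 0" using assms(2) by simp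
    then show ?thesis
      using nb[of k] nc[of k] by (simp add: p_def power_inverse field_simps)
  qed
  have "(\<lambda>k. a * p ^ Suc k / ((p ^ Suc k - b) * (p ^ Suc k - c))) \<longlonglongrightarrow> a * 0 / ((0 - b) * (0 - c))"
    by (intro tendsto_intros p0) (use assms(3,4) in auto)
  then show ?thesis unfolding eq by simp
qed

lemma one_minus_power_Suc_neq_0: "norm (q :: complex) \<noteq> 1 \<Longrightarrow> 1 - q ^ Suc k \<noteq> 0"
  using power_eq_1_iff[of q "Suc k"] by auto

lemma one_minus_mult_power_Suc_neq_0:
  fixes q y :: complex
  assumes "\<forall>n::int. y \<noteq> q powi n" "q \<noteq> 0"
  shows "1 - y * q ^ Suc k \<noteq> 0"
proof
  assume "1 - y * q ^ Suc k = 0"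
  then have "y = inverse (q ^ Suc k)"
    using assms(2) by (simp add: field_simps)
  also have "\<dots> = q powi (- int (Suc k))"
    by (simp only: power_int_minus power_int_of_nat)
  finally show False using assms(1) by blast
qed

lemma triangular_Suc: "Suc k * (Suc k + 1) div 2 = k * (k + 1) div 2 + Suc k"
proof -
  have "Suc k * (Suc k + 1) = k * (k + 1) + 2 * Suc k" by simp
  then show ?thesis by simp
qed

lemma qpoch_0 [simp]: "qpoch a q 0 = 1"
  by (simp add: qpoch_def)

lemma qpoch_Suc: "qpoch a q (Suc k) = qpoch a q k * (1 - a * q ^ k)"
  by (simp add: qpoch_def)

lemma qpoch_inverse_base:
  assumes "a \<noteq> 0" "q \<noteq> 0"
  shows "qpoch (a * inverse q) (inverse q) k
    = (- a) ^ k * inverse q ^ (k * (k + 1) div 2) * qpoch (inverse a * q) q k"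
proof (induction k)
  case (Suc k)
  have "1 - a * inverse q * inverse q ^ k = (- a) * inverse q ^ Suc k * (1 - inverse a * q * q ^ k)"
    using assms by (simp add: field_simps power_inverse)
  then show ?case
    unfolding qpoch_Suc Suc triangular_Suc by (simp add: power_add mult_ac)
qed simp

lemma qpoch_inverse_base_Suc:
  assumes "a \<noteq> 0" "q \<noteq> 0"
  shows "qpoch a (inverse q) (Suc k)
    = (- a) ^ Suc k * inverse q ^ (k * (k + 1) div 2) * qpoch (inverse a) q (Suc k)"
proof -
  have "qpoch a (inverse q) (Suc k) = qpoch (a * q * inverse q) (inverse q) (Suc k)"
    using assms by (simp add: mult.assoc)
  also have "\<dots> = (- (a * q)) ^ Suc k * inverse q ^ (Suc k * (Suc k + 1) div 2)
      * qpoch (inverse a) q (Suc k)"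
    using qpoch_inverse_base[of "a * q" q "Suc k"] assms by (simp add: mult.assoc)
  also have "\<dots> = (- a) ^ Suc k * inverse q ^ (k * (k + 1) div 2) * qpoch (inverse a) q (Suc k)"
    unfolding triangular_Suc minus_mult_left power_mult_distrib using assms
    by (simp add: power_add power_inverse field_simps)
  finally show ?thesis .
qed

lemma powser_q_difference:
  fixes c :: "nat \<Rightarrow> complex"
  assumes summable: "\<And>v. summable (\<lambda>k. c k * v ^ k)"
    and rec: "\<And>k. c (Suc k) * ((1 - a * q ^ Suc k) * (1 - b * q ^ Suc k)) = g * q ^ Suc k * c k"
  defines "F \<equiv> \<lambda>v. \<Sum>k. c k * v ^ k"
  shows "a * b * F (q\<^sup>2 * u) + F u - (a + b) * F (q * u)
    = c 0 * (1 - a) * (1 - b) + g * q * u * F (q * u)"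
proof -
  have sums: "(\<lambda>k. c k * v ^ k) sums F v" for v
    unfolding F_def by (rule summable_sums[OF summable])
  define h where "h k = c k * u ^ k * ((1 - a * q ^ k) * (1 - b * q ^ k))" for k
  have "(\<lambda>k. a * b * (c k * (q\<^sup>2 * u) ^ k) + c k * u ^ k - (a + b) * (c k * (q * u) ^ k))
      sums (a * b * F (q\<^sup>2 * u) + F u - (a + b) * F (q * u))"
    by (intro sums_add sums_diff sums_mult sums)
  moreover have "(\<lambda>k. a * b * (c k * (q\<^sup>2 * u) ^ k) + c k * u ^ k - (a + b) * (c k * (q * u) ^ k)) = h"
    by (simp add: h_def fun_eq_iff power_mult_distrib power_mult[symmetric] power2_eq_square
        algebra_simps)
  ultimately have "h sums (a * b * F (q\<^sup>2 * u) + F u - (a + b) * F (q * u))"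
    by simp
  moreover have "h 0 = c 0 * (1 - a) * (1 - b)"
    by (simp add: h_def)
  ultimately have "(\<lambda>k. h (Suc k))
      sums (a * b * F (q\<^sup>2 * u) + F u - (a + b) * F (q * u) - c 0 * (1 - a) * (1 - b))"
    by (simp add: sums_Suc_iff)
  moreover have "h (Suc k) = g * q * u * (c k * (q * u) ^ k)" for k
  proof -
    have "h (Suc k) = u ^ Suc k * (c (Suc k) * ((1 - a * q ^ Suc k) * (1 - b * q ^ Suc k)))"
      unfolding h_def by (simp only: mult_ac)
    then show ?thesis
      unfolding rec by (simp add: power_mult_distrib mult_ac)
  qed
  then have "(\<lambda>k. h (Suc k)) sums (g * q * u * F (q * u))"
    using sums_mult[OF sums[of "q * u"], of "g * q * u"] by simp
  ultimately have "a * b * F (q\<^sup>2 * u) + F u - (a + b) * F (q * u) - c 0 * (1 - a) * (1 - b)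
      = g * q * u * F (q * u)"
    by (rule sums_unique2)
  then show ?thesis
    by (simp add: algebra_simps)
qed

definition Acoeff :: "complex \<Rightarrow> complex \<Rightarrow> nat \<Rightarrow> complex" where
  "Acoeff x q k = (- 1) ^ k * q ^ (k * (k + 1) div 2) * x ^ k / (qpoch q q k * qpoch (x\<^sup>2 * q) q k)"

definition Ccoeff :: "complex \<Rightarrow> complex \<Rightarrow> nat \<Rightarrow> complex" where
  "Ccoeff x q k =
    (- 1) ^ k * q ^ (k * (k + 1) div 2) / (qpoch (inverse x) q (k + 1) * qpoch x q (k + 1))"

definition Agen :: "complex \<Rightarrow> complex \<Rightarrow> complex \<Rightarrow> complex" where
  "Agen x q u = (\<Sum>k. Acoeff x q k * u ^ k)"

definition Cgen :: "complex \<Rightarrow> complex \<Rightarrow> complex \<Rightarrow> complex" where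
  "Cgen x q u = (\<Sum>k. Ccoeff x q k * u ^ k)"

lemma Acoeff_0 [simp]: "Acoeff x q 0 = 1"
  by (simp add: Acoeff_def)

lemma Agen_0 [simp]: "Agen x q 0 = 1"
  unfolding Agen_def using powser_zero[of "Acoeff x q"] by simp

lemma Acoeff_Suc:
  "Acoeff x q (Suc k) = Acoeff x q k * (- x * q ^ Suc k / ((1 - q ^ Suc k) * (1 - x\<^sup>2 * q ^ Suc k)))"
  unfolding Acoeff_def qpoch_Suc triangular_Suc
  by (simp add: divide_inverse inverse_mult_distrib power_add mult_ac)

lemma Ccoeff_Suc:
  "Ccoeff x q (Suc k) =
    Ccoeff x q k * (- 1 * q ^ Suc k / ((1 - inverse x * q ^ Suc k) * (1 - x * q ^ Suc k)))"
  unfolding Ccoeff_def triangular_Suc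
  by (simp add: divide_inverse inverse_mult_distrib power_add mult_ac qpoch_Suc)

lemma Aser_eq_suminf_Acoeff:
  assumes "x \<noteq> 0" "q \<noteq> 0"
  shows "Aser m x q = (\<Sum>k. x powi m * (Acoeff x q k * (q powi m) ^ k))"
proof -
  have "(- 1) ^ k * q powi (int (k * (k + 1) div 2) + int k * m) * x powi (int k + m)
      / (qpoch q q k * qpoch (x\<^sup>2 * q) q k) = x powi m * (Acoeff x q k * (q powi m) ^ k)" for k
    using assms by (simp add: Acoeff_def power_int_add power_int_power' mult.commute field_simps)
  then show ?thesis
    unfolding Aser_def by simp
qed

lemma Cser_eq_suminf_Ccoeff:
  assumes "q \<noteq> 0"
  shows "Cser m x q = (\<Sum>k. Ccoeff x q k * (q powi m) ^ k)"
proof -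
  have "(- 1) ^ k * q powi (int (k * (k + 1) div 2) + int k * m)
      / (qpoch (inverse x) q (k + 1) * qpoch x q (k + 1)) = Ccoeff x q k * (q powi m) ^ k" for k
    using assms by (simp add: Ccoeff_def power_int_add power_int_power' mult.commute field_simps)
  then show ?thesis
    unfolding Cser_def by simp
qed

lemma Cser_eq_Cgen:
  assumes "q \<noteq> 0"
  shows "Cser m x q = Cgen x q (q powi m)"
  unfolding Cser_eq_suminf_Ccoeff[OF assms] Cgen_def ..

context
  fixes x q :: complex
  assumes q: "norm q \<noteq> 1" "q \<noteq> 0" and x: "x \<noteq> 0"
begin

lemma Acoeff_ratio_tendsto_0:
  assumes "\<forall>n::int. x\<^sup>2 \<noteq> q powi n"
  shows "(\<lambda>k. - x * q ^ Suc k / ((1 - q ^ Suc k) * (1 - x\<^sup>2 * q ^ Suc k))) \<longlonglongrightarrow> 0"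
  using q_ratio_tendsto_0[of q 1 "x\<^sup>2" "- x"] q x assms
    one_minus_power_Suc_neq_0 one_minus_mult_power_Suc_neq_0 by simp

lemma Ccoeff_ratio_tendsto_0:
  assumes "\<forall>n::int. x \<noteq> q powi n" "\<forall>n::int. inverse x \<noteq> q powi n"
  shows "(\<lambda>k. - 1 * q ^ Suc k / ((1 - inverse x * q ^ Suc k) * (1 - x * q ^ Suc k))) \<longlonglongrightarrow> 0"
  by (rule q_ratio_tendsto_0) (use q x assms one_minus_mult_power_Suc_neq_0 in auto)

lemma summable_Acoeff_powser:
  assumes "\<forall>n::int. x\<^sup>2 \<noteq> q powi n"
  shows "summable (\<lambda>k. Acoeff x q k * u ^ k)"
  using Acoeff_Suc Acoeff_ratio_tendsto_0[OF assms] by (rule powser_summable_of_ratio_tendsto_0)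

lemma isCont_Agen_0:
  assumes "\<forall>n::int. x\<^sup>2 \<noteq> q powi n"
  shows "isCont (Agen x q) 0"
  unfolding Agen_def[abs_def]
  using Acoeff_Suc Acoeff_ratio_tendsto_0[OF assms] by (rule isCont_powser_of_ratio_tendsto_0)

lemma Agen_q_difference:
  assumes "\<forall>n::int. x\<^sup>2 \<noteq> q powi n"
  shows "x\<^sup>2 * Agen x q (q\<^sup>2 * u) + Agen x q u - (1 + x\<^sup>2) * Agen x q (q * u)
    = - x * q * u * Agen x q (q * u)"
proof -
  have "Acoeff x q (Suc k) * ((1 - 1 * q ^ Suc k) * (1 - x\<^sup>2 * q ^ Suc k))
      = - x * q ^ Suc k * Acoeff x q k" for k
    using one_minus_power_Suc_neq_0[OF q(1)] one_minus_mult_power_Suc_neq_0[OF assms q(2)]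
    by (simp add: Acoeff_Suc del: power_Suc)
  from powser_q_difference[OF summable_Acoeff_powser[OF assms] this, of u]
  show ?thesis unfolding Agen_def[symmetric] by simp
qed

lemma summable_Ccoeff_powser:
  assumes "\<forall>n::int. x \<noteq> q powi n" "\<forall>n::int. inverse x \<noteq> q powi n"
  shows "summable (\<lambda>k. Ccoeff x q k * u ^ k)"
  using Ccoeff_Suc Ccoeff_ratio_tendsto_0[OF assms] by (rule powser_summable_of_ratio_tendsto_0)

lemma Cgen_q_difference:
  assumes "\<forall>n::int. x \<noteq> q powi n" "\<forall>n::int. inverse x \<noteq> q powi n"
  shows "Cgen x q (q\<^sup>2 * u) + Cgen x q u - (inverse x + x) * Cgen x q (q * u)
    = 1 - q * u * Cgen x q (q * u)"
proof -
  have "Ccoeff x q (Suc k) * ((1 - inverse x * q ^ Suc k) * (1 - x * q ^ Suc k))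
      = - 1 * q ^ Suc k * Ccoeff x q k" for k
    using one_minus_mult_power_Suc_neq_0[OF assms(2) q(2)]
      one_minus_mult_power_Suc_neq_0[OF assms(1) q(2)]
    by (simp add: Ccoeff_Suc del: power_Suc)
  note diff = powser_q_difference[OF summable_Ccoeff_powser[OF assms] this, of u]
  have "x \<noteq> 1"
    using assms(1) by (metis power_int_0_right)
  then have "1 - inverse x \<noteq> 0" "1 - x \<noteq> 0"
    using x by (auto simp: field_simps)
  then have "Ccoeff x q 0 * (1 - inverse x) * (1 - x) = 1"
    by (simp add: Ccoeff_def qpoch_def)
  with diff x show ?thesis unfolding Cgen_def[symmetric] by simp
qed

lemma Aser_eq_Agen:
  assumes "\<forall>n::int. x\<^sup>2 \<noteq> q powi n"
  shows "Aser m x q = x powi m * Agen x q (q powi m)"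
  unfolding Aser_eq_suminf_Acoeff[OF x q(2)] Agen_def
  using suminf_mult[OF summable_Acoeff_powser[OF assms]] by simp

lemma Aser_recurrence:
  assumes "\<forall>n::int. x\<^sup>2 \<noteq> q powi n"
  shows "Aser (m + 2) x q = (inverse x + x - q powi m * q) * Aser (m + 1) x q - Aser m x q"
proof -
  have powers: "q powi (m + 1) = q * q powi m" "q powi (m + 2) = q\<^sup>2 * q powi m"
    "x powi (m + 1) = x powi m * x" "x powi (m + 2) = x powi m * x\<^sup>2"
    using q x by (simp_all add: power_int_add mult.commute)
  have "x * x powi m * (x\<^sup>2 * Agen x q (q\<^sup>2 * q powi m) + Agen x q (q powi m)
      - (1 + x\<^sup>2) * Agen x q (q * q powi m))
    = x * x powi m * (- x * q * q powi m * Agen x q (q * q powi m))"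
    using Agen_q_difference[OF assms, of "q powi m"] by simp
  then show ?thesis
    using x unfolding Aser_eq_Agen[OF assms] powers by (simp add: field_simps power2_eq_square)
qed

lemma Cser_recurrence:
  assumes "\<forall>n::int. x \<noteq> q powi n" "\<forall>n::int. inverse x \<noteq> q powi n"
  shows "Cser (m + 2) x q = 1 - Cser m x q + (inverse x + x - q powi m * q) * Cser (m + 1) x q"
proof -
  have powers: "q powi (m + 1) = q * q powi m" "q powi (m + 2) = q\<^sup>2 * q powi m"
    using q by (simp_all add: power_int_add mult.commute)
  show ?thesis
    using Cgen_q_difference[OF assms, of "q powi m"]
    unfolding Cser_eq_Cgen[OF q(2)] powers by (simp add: algebra_simps)
qed

end

lemma Bser_recurrence:
  assumes "norm q \<noteq> 1" "q \<noteq> 0" "x \<noteq> 0" "\<forall>n::int. inverse x ^ 2 \<noteq> q powi n"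
  shows "Bser (m + 2) x q = (inverse x + x - q powi m * q) * Bser (m + 1) x q - Bser m x q"
  using Aser_recurrence[of q "inverse x" m] assms by (simp add: Bser_def add.commute)

lemma Acoeff_inverse_q:
  assumes "x \<noteq> 0" "q \<noteq> 0"
  shows "Acoeff x (inverse q) k = Acoeff (inverse x) q k"
proof -
  have qpoch_q: "qpoch (inverse q) (inverse q) k = (- 1) ^ k * inverse q ^ (k * (k + 1) div 2) * qpoch q q k"
    using qpoch_inverse_base[of 1 q k] assms by simp
  have qpoch_x2: "qpoch (x\<^sup>2 * inverse q) (inverse q) k
      = (- 1) ^ k * (x ^ k * x ^ k) * inverse q ^ (k * (k + 1) div 2) * qpoch (inverse x ^ 2 * q) q k"
    using qpoch_inverse_base[of "x\<^sup>2" q k] assms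
    by (simp add: power_inverse power2_eq_square power_mult_distrib power_minus')
  show ?thesis unfolding Acoeff_def qpoch_q qpoch_x2 using assms
    by (simp add: field_simps power_inverse power_mult_distrib power2_eq_square)
qed

lemma Ccoeff_inverse_q:
  assumes "x \<noteq> 0" "q \<noteq> 0"
  shows "Ccoeff x (inverse q) k = Ccoeff x q k"
proof -
  have unit: "(- inverse x) ^ Suc k * (- x) ^ Suc k = 1"
    using assms by (simp add: power_mult_distrib[symmetric] del: power_Suc)
  have "qpoch (inverse x) (inverse q) (Suc k) * qpoch x (inverse q) (Suc k)
      = ((- inverse x) ^ Suc k * (- x) ^ Suc k) * (inverse q ^ (k * (k + 1) div 2))\<^sup>2
        * (qpoch (inverse x) q (Suc k) * qpoch x q (Suc k))"
    using qpoch_inverse_base_Suc[of "inverse x" q k] qpoch_inverse_base_Suc[of x q k] assms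
    by (simp add: power2_eq_square mult_ac del: power_Suc)
  also have "\<dots> = (inverse q ^ (k * (k + 1) div 2))\<^sup>2 * (qpoch (inverse x) q (Suc k) * qpoch x q (Suc k))"
    unfolding unit by simp
  finally have denominator: "qpoch (inverse x) (inverse q) (Suc k) * qpoch x (inverse q) (Suc k)
      = (inverse q ^ (k * (k + 1) div 2))\<^sup>2 * (qpoch (inverse x) q (Suc k) * qpoch x q (Suc k))" .
  show ?thesis
    unfolding Ccoeff_def Suc_eq_plus1[symmetric] denominator using assms
    by (simp add: field_simps power_inverse power2_eq_square power_mult_distrib del: power_Suc)
qed

lemma Aser_inverse_q:
  assumes "x \<noteq> 0" "q \<noteq> 0"
  shows "Aser m x (inverse q) = Bser (- m) x q"
  using assms
  by (simp add: Aser_eq_suminf_Acoeff Bser_def Acoeff_inverse_q power_int_minus power_int_inverse)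

lemma Bser_inverse_q:
  assumes "x \<noteq> 0" "q \<noteq> 0"
  shows "Bser m x (inverse q) = Aser (- m) x q"
  using Aser_inverse_q[of "inverse x" q m] assms by (simp add: Bser_def)

lemma Cser_inverse_q:
  assumes "x \<noteq> 0" "q \<noteq> 0"
  shows "Cser m x (inverse q) = Cser (- m) x q"
  using assms by (simp add: Cser_eq_suminf_Ccoeff Ccoeff_inverse_q power_int_minus power_int_inverse)

lemma int_shift_invariant_const:
  fixes f :: "int \<Rightarrow> 'a"
  assumes "\<And>i. f (i + 1) = f i"
  shows "f i = f 0"
proof (induction i rule: int_induct[where k=0])
  case (step2 i)
  then show ?case using assms[of "i - 1"] by simp
qed (use assms in simp_all)

lemma isCont_0_eq_if_const_on_powi:
  fixes f :: "complex \<Rightarrow> 'a::t2_space"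
  assumes "isCont f 0" "norm q \<noteq> 1" "q \<noteq> 0" and const: "\<And>m. f (q powi m) = c"
  shows "f 0 = c"
proof -
  obtain s :: "nat \<Rightarrow> int" where s: "(\<lambda>n. q powi s n) \<longlonglongrightarrow> 0"
  proof (cases "norm q < 1")
    case True
    then show ?thesis using that[of int] LIMSEQ_power_zero[OF True] by simp
  next
    case False
    then have "norm (inverse q) < 1"
      using assms(2,3) by (simp add: norm_inverse inverse_less_1_iff)
    moreover have "q powi (- int n) = inverse q ^ n" for n
      by (simp add: power_int_minus power_inverse)
    ultimately show ?thesis using that[of "\<lambda>n. - int n"] LIMSEQ_power_zero by auto
  qed
  have "(\<lambda>n. f (q powi s n)) \<longlonglongrightarrow> f 0"
    by (rule isCont_tendsto_compose[OF assms(1) s])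
  then show ?thesis
    by (simp add: const LIMSEQ_const_iff)
qed

lemma Aser_Bser_wronskian:
  assumes q: "norm q \<noteq> 1" "q \<noteq> 0" and x: "x \<noteq> 0"
    and nonres: "\<forall>n::int. x\<^sup>2 \<noteq> q powi n" "\<forall>n::int. inverse x ^ 2 \<noteq> q powi n"
  shows "Aser m x q * Bser (m + 1) x q - Aser (m + 1) x q * Bser m x q = inverse x - x"
proof -
  define W where "W m = Aser m x q * Bser (m + 1) x q - Aser (m + 1) x q * Bser m x q" for m
  define V where "V u = Agen x q u * Agen (inverse x) q (q * u) / x
    - x * Agen x q (q * u) * Agen (inverse x) q u" for u
  have x': "inverse x \<noteq> 0"
    using x by simp
  have W_const: "W m = W 0" for m
  proof (rule int_shift_invariant_const)
    fix i
    have two: "i + 1 + 1 = i + (2::int)" by simp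
    show "W (i + 1) = W i"
      unfolding W_def two Aser_recurrence[OF q x nonres(1), of i]
        Bser_recurrence[OF q x nonres(2), of i]
      by (simp add: algebra_simps)
  qed
  have W_V: "W m = V (q powi m)" for m
  proof -
    have "x powi (m + 1) = x powi m * x" "q powi (m + 1) = q powi m * q"
      using q x by (simp_all add: power_int_add)
    then show ?thesis
      unfolding W_def V_def Bser_def Aser_eq_Agen[OF q x nonres(1)]
        Aser_eq_Agen[OF q x' nonres(2)]
      using q x by (simp add: power_int_inverse power_int_not_zero field_simps)
  qed
  have "isCont (\<lambda>u. Agen x q (q * u)) 0" "isCont (\<lambda>u. Agen (inverse x) q (q * u)) 0"
    using isCont_o2[where f="\<lambda>u. q * u" and a=0] isCont_Agen_0[OF q x nonres(1)]
      isCont_Agen_0[OF q x' nonres(2)] x by simp_all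
  then have "isCont V 0"
    unfolding V_def using isCont_Agen_0[OF q x nonres(1)] isCont_Agen_0[OF q x' nonres(2)] x
    by (intro continuous_intros) auto
  moreover have "V 0 = inverse x - x"
    unfolding V_def using x by (simp add: field_simps)
  ultimately have "W 0 = inverse x - x"
    using isCont_0_eq_if_const_on_powi[OF _ q, of V "W 0"] W_V W_const by simp
  then show ?thesis
    using W_const[of m] unfolding W_def by simp
qed

lemma mat3_nth:
  "mat3 a11 a12 a13 a21 a22 a23 a31 a32 a33 $ i $ j =
    (if i = 1 then (if j = 1 then a11 else if j = 2 then a12 else a13)
     else if i = 2 then (if j = 1 then a21 else if j = 2 then a22 else a23)
     else (if j = 1 then a31 else if j = 2 then a32 else a33))"
  by (simp add: mat3_def)

lemma mat3_eq_iff: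
  "M = mat3 a11 a12 a13 a21 a22 a23 a31 a32 a33 \<longleftrightarrow>
    M$1$1 = a11 \<and> M$1$2 = a12 \<and> M$1$3 = a13 \<and> M$2$1 = a21 \<and> M$2$2 = a22 \<and> M$2$3 = a23 \<and>
    M$3$1 = a31 \<and> M$3$2 = a32 \<and> M$3$3 = a33"
  by (auto simp: vec_eq_iff mat3_nth forall_3)

lemma mat3_mult:
  "mat3 a11 a12 a13 a21 a22 a23 a31 a32 a33 ** mat3 b11 b12 b13 b21 b22 b23 b31 b32 b33
  = mat3 (a11*b11+a12*b21+a13*b31) (a11*b12+a12*b22+a13*b32) (a11*b13+a12*b23+a13*b33)
         (a21*b11+a22*b21+a23*b31) (a21*b12+a22*b22+a23*b32) (a21*b13+a22*b23+a23*b33)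
         (a31*b11+a32*b21+a33*b31) (a31*b12+a32*b22+a33*b32) (a31*b13+a32*b23+a33*b33)"
  by (simp add: mat3_eq_iff matrix_matrix_mult_def sum_3 mat3_nth)

lemma det_mat3:
  "det (mat3 a11 a12 a13 a21 a22 a23 a31 a32 a33) =
    a11*a22*a33 + a12*a23*a31 + a13*a21*a32 - a11*a23*a32 - a12*a21*a33 - a13*a22*a31"
  by (simp add: det_3 mat3_nth)

lemma Jmat_Suc_eq_mult_Amat:
  assumes "Cser (m + 2) x q = 1 - Cser m x q + (inverse x + x - q powi m * q) * Cser (m + 1) x q"
    and "Aser (m + 2) x q = (inverse x + x - q powi m * q) * Aser (m + 1) x q - Aser m x q"
    and "Bser (m + 2) x q = (inverse x + x - q powi m * q) * Bser (m + 1) x q - Bser m x q"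
  shows "Jmat (m + 1) x q = Jmat m x q ** Amat x (q powi m) q"
  unfolding Jmat_def Amat_def mat3_mult
  by (simp add: mat3_eq_iff mat3_nth add.assoc assms)

lemma det_Jmat: "det (Jmat m x q) = Aser m x q * Bser (m + 1) x q - Aser (m + 1) x q * Bser m x q"
  by (simp add: Jmat_def det_mat3)

lemma Jmat_inverse_q:
  assumes "x \<noteq> 0" "q \<noteq> 0"
  shows "Jmat m x (inverse q) = Pmat ** Jmat (- m - 1) x q ** Pmat"
  using assms unfolding Jmat_def Pmat_def mat3_mult
  by (simp add: mat3_eq_iff mat3_nth Aser_inverse_q Bser_inverse_q Cser_inverse_q)

theorem theorem3p1:
  fixes q x :: complex and m :: int
  assumes "norm q \<noteq> 1" and "q \<noteq> 0" and "x \<noteq> 0"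
    and "\<forall>n::int. x \<noteq> q powi n \<and> inverse x \<noteq> q powi n
                 \<and> x ^ 2 \<noteq> q powi n \<and> inverse x ^ 2 \<noteq> q powi n"
  shows "Jmat (m + 1) x q = Jmat m x q ** Amat x (q powi m) q
     \<and> det (Jmat m x q) = inverse x - x
     \<and> Jmat m x (inverse q) = Pmat ** Jmat (- m - 1) x q ** Pmat"
proof (intro conjI)
  have q: "norm q \<noteq> 1" "q \<noteq> 0" and x: "x \<noteq> 0"
    and nonres: "\<forall>n::int. x \<noteq> q powi n" "\<forall>n::int. inverse x \<noteq> q powi n"
      "\<forall>n::int. x\<^sup>2 \<noteq> q powi n" "\<forall>n::int. inverse x ^ 2 \<noteq> q powi n"
    using assms by auto
  show "Jmat (m + 1) x q = Jmat m x q ** Amat x (q powi m) q"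
    using Cser_recurrence[OF q x nonres(1,2)] Aser_recurrence[OF q x nonres(3)]
      Bser_recurrence[OF q x nonres(4)] by (rule Jmat_Suc_eq_mult_Amat)
  show "det (Jmat m x q) = inverse x - x"
    unfolding det_Jmat using Aser_Bser_wronskian[OF q x nonres(3,4)] .
  show "Jmat m x (inverse q) = Pmat ** Jmat (- m - 1) x q ** Pmat"
    using x q(2) by (rule Jmat_inverse_q)
qed

end
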